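(* Let $X\in\mathcal{Y}$ and $T\in L(X)$. Suppose there exists $M\in L(X)$ with $[T,[T,M]]=0$ such that for every cyclic vector $u$ of $T$ and every $v\in X$ there exist $B,C\in\mathcal{C}(T)$ with $C[T,M]\neq 0$ and $Cv=Bu$. Then $T$ is not weakly supercyclic.
   Context: Scalars are $\mathbb{K}\in\{\mathbb{R},\mathbb{C}\}$. $L(X)$ denotes bounded linear operators on the Banach space $X$; $[T,S]=TS-ST$; $\mathcal{C}(T)=\{S\in L(X):[T,S]=0\}$. A vector $u$ is cyclic for $T$ if the span of $\{T^nu:n\in\mathbb{Z}_+\}$ is dense. $T$ is weakly supercyclic if for some $x$ the set $\{zT^nx:z\in\mathbb{K},n\in\mathbb{Z}_+\}$ is weakly dense in $X$. $\mathcal{Y}$ is the class of Banach spaces $X$ such that for every sequence $(x_n)_{n\in\mathbb{Z}_+}$ in $X$ with $n=O(\|x_n\|)$ as $n\to\infty$, the set $\{x_n:n\in\mathbb{Z}_+\}$ is weakly closed. *)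

theory Defs
  imports "HOL-Analysis.Analysis" "HOL-Library.Landau_Symbols"
begin

text \<open>Scalar multiplication sc over a scalar field 'k making a real Banach space a
  K-Banach space (used with K = complex; for K = real one uses scaleR).\<close>
definition normed_module :: "('k::real_normed_field \<Rightarrow> 'a::real_normed_vector \<Rightarrow> 'a) \<Rightarrow> bool" where
  "normed_module sc \<longleftrightarrow>
     (\<forall>r x. sc (of_real r) x = scaleR r x) \<and>
     (\<forall>a b x. sc a (sc b x) = sc (a * b) x) \<and>
     (\<forall>a x y. sc a (x + y) = sc a x + sc a y) \<and>
     (\<forall>a b x. sc (a + b) x = sc a x + sc b x) \<and>
     (\<forall>x. sc 1 x = x) \<and>
     (\<forall>a x. norm (sc a x) = norm a * norm x)"

definition linop :: "('k \<Rightarrow> 'a::real_normed_vector \<Rightarrow> 'a) \<Rightarrow> ('a \<Rightarrow> 'a) \<Rightarrow> bool" where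
  "linop sc T \<longleftrightarrow> bounded_linear T \<and> (\<forall>c x. T (sc c x) = sc c (T x))"

definition comm :: "('a::ab_group_add \<Rightarrow> 'a) \<Rightarrow> ('a \<Rightarrow> 'a) \<Rightarrow> 'a \<Rightarrow> 'a" where
  "comm T S = (\<lambda>x. T (S x) - S (T x))"

definition centralizer :: "('k \<Rightarrow> 'a::real_normed_vector \<Rightarrow> 'a) \<Rightarrow> ('a \<Rightarrow> 'a) \<Rightarrow> ('a \<Rightarrow> 'a) set" where
  "centralizer sc T = {S. linop sc S \<and> comm T S = (\<lambda>x. 0)}"

definition kspan :: "('k \<Rightarrow> 'a::real_normed_vector \<Rightarrow> 'a) \<Rightarrow> 'a set \<Rightarrow> 'a set" where
  "kspan sc A = {\<Sum>i<n. sc (c i) (v i) | (n::nat) c v. \<forall>i<n. v i \<in> A}"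

definition cyclic_vector :: "('k \<Rightarrow> 'a::real_normed_vector \<Rightarrow> 'a) \<Rightarrow> ('a \<Rightarrow> 'a) \<Rightarrow> 'a \<Rightarrow> bool" where
  "cyclic_vector sc T u \<longleftrightarrow> closure (kspan sc (range (\<lambda>n. (T ^^ n) u))) = UNIV"

text \<open>Closure in the weak topology sigma(X, X*), via basic weak neighbourhoods.
  Real-valued continuous real-linear functionals generate the weak topology both
  for real and for complex spaces.\<close>
definition weak_closure :: "'a::real_normed_vector set \<Rightarrow> 'a set" where
  "weak_closure S = {x. \<forall>F::('a \<Rightarrow> real) set. finite F \<and> (\<forall>f\<in>F. bounded_linear f) \<longrightarrow>
      (\<forall>e>0. \<exists>s\<in>S. \<forall>f\<in>F. \<bar>f s - f x\<bar> < e)}"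

definition weakly_closed :: "'a::real_normed_vector set \<Rightarrow> bool" where
  "weakly_closed S \<longleftrightarrow> weak_closure S \<subseteq> S"

definition weakly_supercyclic :: "('k \<Rightarrow> 'a::real_normed_vector \<Rightarrow> 'a) \<Rightarrow> ('a \<Rightarrow> 'a) \<Rightarrow> bool" where
  "weakly_supercyclic sc T \<longleftrightarrow>
     (\<exists>x. weak_closure {sc z ((T ^^ n) x) | z n. True} = UNIV)"

definition in_class_Y :: "'a::real_normed_vector itself \<Rightarrow> bool" where
  "in_class_Y _ \<longleftrightarrow> (\<forall>xs :: nat \<Rightarrow> 'a.
      (\<lambda>n. real n) \<in> O(\<lambda>n. norm (xs n)) \<longrightarrow> weakly_closed (range xs))"

end

theory Submission
  imports Defs
begin

(*
  Let u be weakly supercyclic; it is cyclic, so the hypothesis for (u, M T u) gives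
  W = C [T, M] \<noteq> 0 and D = C M T - B with D u = 0, and [T, [T, M]] = 0 yields [T, D] = W T,
  whence D = -n W at the orbit point z T^n u.  Normalising the orbit with a weakly continuous
  functional G (so that G (W x) = 1) and using that the ranges of the sequences (l - n) v_n are
  weakly closed in a space of class Y, one finds D y = -n(y) W y on the level set G (W y) = 1,
  then D = -n W on the whole space, and n = 0 since D u = 0 \<noteq> W u.  So W T = 0, and the
  projective orbit lies in the union of the line through u and ker W: two weakly closed
  subspaces, one of which would have to be the whole space -- impossible.
*)

text \<open>Graphs of real-linear functionals on subspaces that are dominated by \<open>K \<parallel>\<cdot>\<parallel>\<close>; the
  objects of the Zorn argument for Hahn--Banach.\<close>
definition dominated_graph :: "real \<Rightarrow> ('a::real_normed_vector \<times> real) set \<Rightarrow> bool" where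
  "dominated_graph K G \<longleftrightarrow>
     (\<forall>a r r'. (a, r) \<in> G \<longrightarrow> (a, r') \<in> G \<longrightarrow> r = r') \<and>
     (\<forall>a r b q. (a, r) \<in> G \<longrightarrow> (b, q) \<in> G \<longrightarrow> (a + b, r + q) \<in> G) \<and>
     (\<forall>a r c. (a, r) \<in> G \<longrightarrow> (c *\<^sub>R a, c * r) \<in> G) \<and>
     (\<forall>a r. (a, r) \<in> G \<longrightarrow> r \<le> K * norm a)"

lemma dominated_graphD:
  assumes "dominated_graph K G"
  shows dominated_graph_unique: "(a, r) \<in> G \<Longrightarrow> (a, r') \<in> G \<Longrightarrow> r = r'"
    and dominated_graph_add: "(a, r) \<in> G \<Longrightarrow> (b, q) \<in> G \<Longrightarrow> (a + b, r + q) \<in> G"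
    and dominated_graph_scale: "(a, r) \<in> G \<Longrightarrow> (c *\<^sub>R a, c * r) \<in> G"
    and dominated_graph_bound: "(a, r) \<in> G \<Longrightarrow> r \<le> K * norm a"
  using assms unfolding dominated_graph_def by blast+

lemma dominated_graph_chain_Union:
  assumes C: "C \<in> chains {G. dominated_graph K G \<and> G0 \<subseteq> G}" and "C \<noteq> {}"
  shows "dominated_graph K (\<Union>C) \<and> G0 \<subseteq> \<Union>C"
proof -
  have mem: "dominated_graph K G \<and> G0 \<subseteq> G" if "G \<in> C" for G
    using chainsD2[OF C] that by blast
  have common: "\<exists>G\<in>C. p \<in> G \<and> q \<in> G" if "p \<in> \<Union>C" "q \<in> \<Union>C" for p q
    using chainsD[OF C] that by blast
  have "dominated_graph K (\<Union>C)"
    unfolding dominated_graph_def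
  proof (intro conjI allI impI)
    fix a r r' assume "(a, r) \<in> \<Union>C" "(a, r') \<in> \<Union>C"
    then show "r = r'" using common mem dominated_graph_unique by metis
  next
    fix a r b q assume "(a, r) \<in> \<Union>C" "(b, q) \<in> \<Union>C"
    then show "(a + b, r + q) \<in> \<Union>C" using common mem dominated_graph_add by (metis UnionI)
  next
    fix a r c assume "(a, r) \<in> \<Union>C"
    then show "(c *\<^sub>R a, c * r) \<in> \<Union>C" using mem dominated_graph_scale by blast
  next
    fix a r assume "(a, r) \<in> \<Union>C"
    then show "r \<le> K * norm a" using mem dominated_graph_bound by blast
  qed
  then show ?thesis using assms(2) mem by blast
qed

text \<open>The classical choice of the value \<open>c\<close> at a new direction \<open>x0\<close>: every lower
  bound coming from the graph lies below every upper bound.\<close>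
lemma dominated_graph_extension_value:
  assumes G: "dominated_graph K G" and K: "K \<ge> 0" and zero: "(0, 0) \<in> G"
  obtains c where "\<And>a r. (a, r) \<in> G \<Longrightarrow> r - K * norm (a - x0) \<le> c"
    and "\<And>b q. (b, q) \<in> G \<Longrightarrow> c \<le> K * norm (b + x0) - q"
proof -
  define L where "L = {r - K * norm (a - x0) | a r. (a, r) \<in> G}"
  have below: "r - K * norm (a - x0) \<le> K * norm (b + x0) - q" if "(a, r) \<in> G" "(b, q) \<in> G" for a r b q
  proof -
    have "r + q \<le> K * norm (a + b)" using dominated_graph_bound[OF G dominated_graph_add[OF G that]] .
    also have "\<dots> \<le> K * (norm (a - x0) + norm (b + x0))"
      using norm_triangle_ineq[of "a - x0" "b + x0"] K by (intro mult_left_mono) simp_all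
    finally show ?thesis by (simp add: algebra_simps)
  qed
  have "L \<noteq> {}" "bdd_above L" using zero below unfolding L_def bdd_above_def by blast+
  then show ?thesis
    using that[of "Sup L"] cSup_upper cSup_least below unfolding L_def by (smt (verit) mem_Collect_eq)
qed

text \<open>With \<open>c\<close> chosen as above, the extended functional \<open>a + t x0 \<mapsto> r + t c\<close> is still
  dominated; by the symmetry \<open>(x0, c) \<mapsto> (-x0, -c)\<close> it suffices to treat \<open>t > 0\<close>.\<close>
lemma dominated_graph_extension_bound_pos:
  assumes G: "dominated_graph K G" and upper: "\<And>b q. (b, q) \<in> G \<Longrightarrow> c \<le> K * norm (b + x0) - q"
    and ar: "(a, r) \<in> G" and t: "t > 0"
  shows "r + t * c \<le> K * norm (a + t *\<^sub>R x0)"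
proof -
  have "c \<le> K * norm ((1 / t) *\<^sub>R a + x0) - (1 / t) * r"
    using upper[OF dominated_graph_scale[OF G ar]] .
  then have "t * c \<le> K * (t * norm ((1 / t) *\<^sub>R a + x0)) - r"
    using t by (simp add: field_simps)
  also have "t * norm ((1 / t) *\<^sub>R a + x0) = norm (t *\<^sub>R ((1 / t) *\<^sub>R a + x0))"
    using t by simp
  also have "t *\<^sub>R ((1 / t) *\<^sub>R a + x0) = a + t *\<^sub>R x0"
    using t by (simp add: scaleR_add_right)
  finally show ?thesis by simp
qed

lemma dominated_graph_extension_bound:
  assumes G: "dominated_graph K G"
    and lower: "\<And>a r. (a, r) \<in> G \<Longrightarrow> r - K * norm (a - x0) \<le> c"
    and upper: "\<And>b q. (b, q) \<in> G \<Longrightarrow> c \<le> K * norm (b + x0) - q"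
    and ar: "(a, r) \<in> G"
  shows "r + t * c \<le> K * norm (a + t *\<^sub>R x0)"
proof (cases t "0 :: real" rule: linorder_cases)
  case less
  have "\<And>b q. (b, q) \<in> G \<Longrightarrow> - c \<le> K * norm (b + - x0) - q"
    using lower by fastforce
  from dominated_graph_extension_bound_pos[OF G this ar, of "- t"] less show ?thesis by simp
next
  case equal
  then show ?thesis using dominated_graph_bound[OF G ar] by simp
next
  case greater
  then show ?thesis using dominated_graph_extension_bound_pos[OF G upper ar] by simp
qed

lemma dominated_graph_new_direction:
  assumes G: "dominated_graph K G" and x0: "\<And>r. (x0, r) \<notin> G"
    and "(a, r) \<in> G" "(a', r') \<in> G" and eq: "a + t *\<^sub>R x0 = a' + t' *\<^sub>R x0"
  shows "t = t'"
proof (rule ccontr)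
  assume ne: "t \<noteq> t'"
  have "(a' + (-1) *\<^sub>R a, r' + (-1) * r) \<in> G"
    using assms(3,4) dominated_graph_add[OF G] dominated_graph_scale[OF G] by blast
  from dominated_graph_scale[OF G this, of "1 / (t - t')"]
  have "((1 / (t - t')) *\<^sub>R (a' - a), (1 / (t - t')) * (r' - r)) \<in> G" by simp
  moreover have "a' - a = (t - t') *\<^sub>R x0" using eq by (simp add: algebra_simps)
  ultimately show False using x0 ne by simp
qed

lemma dominated_graph_line_extension:
  assumes G: "dominated_graph K G" and x0: "\<And>r. (x0, r) \<notin> G"
    and lower: "\<And>a r. (a, r) \<in> G \<Longrightarrow> r - K * norm (a - x0) \<le> c"
    and upper: "\<And>b q. (b, q) \<in> G \<Longrightarrow> c \<le> K * norm (b + x0) - q"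
  shows "dominated_graph K {(a + t *\<^sub>R x0, r + t * c) | a r t. (a, r) \<in> G}"
    (is "dominated_graph K ?G'")
  unfolding dominated_graph_def
proof (intro conjI allI impI)
  fix z s s' assume "(z, s) \<in> ?G'" "(z, s') \<in> ?G'"
  then obtain a r t a' r' t' where 1: "z = a + t *\<^sub>R x0" "s = r + t * c" "(a, r) \<in> G"
    and 2: "z = a' + t' *\<^sub>R x0" "s' = r' + t' * c" "(a', r') \<in> G"
    by blast
  have "t = t'" using dominated_graph_new_direction[OF G x0 1(3) 2(3)] 1(1) 2(1) by simp
  with 1 2 show "s = s'" using dominated_graph_unique[OF G] by auto
next
  fix z s w q assume "(z, s) \<in> ?G'" "(w, q) \<in> ?G'"
  then obtain a r t a' r' t' where 1: "z = a + t *\<^sub>R x0" "s = r + t * c" "(a, r) \<in> G"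
    and 2: "w = a' + t' *\<^sub>R x0" "q = r' + t' * c" "(a', r') \<in> G"
    by blast
  then have "z + w = (a + a') + (t + t') *\<^sub>R x0" "s + q = (r + r') + (t + t') * c"
    by (simp_all add: algebra_simps)
  with dominated_graph_add[OF G 1(3) 2(3)] show "(z + w, s + q) \<in> ?G'" by blast
next
  fix z s d assume "(z, s) \<in> ?G'"
  then obtain a r t where 1: "z = a + t *\<^sub>R x0" "s = r + t * c" "(a, r) \<in> G" by blast
  then have "d *\<^sub>R z = d *\<^sub>R a + (d * t) *\<^sub>R x0" "d * s = d * r + (d * t) * c"
    by (simp_all add: algebra_simps)
  with dominated_graph_scale[OF G 1(3)] show "(d *\<^sub>R z, d * s) \<in> ?G'" by blast
next
  fix z s assume "(z, s) \<in> ?G'"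
  then show "s \<le> K * norm z" using dominated_graph_extension_bound[OF G lower upper] by blast
qed

lemma dominated_graph_extend:
  assumes G: "dominated_graph K G" and K: "K \<ge> 0" and "G \<noteq> {}" and x0: "\<And>r. (x0, r) \<notin> G"
  shows "\<exists>G'. dominated_graph K G' \<and> G \<subseteq> G' \<and> G' \<noteq> G"
proof -
  obtain a0 r0 where "(a0, r0) \<in> G" using \<open>G \<noteq> {}\<close> by auto
  from dominated_graph_scale[OF G this, of 0] have zero: "(0, 0) \<in> G" by simp
  obtain c where lower: "\<And>a r. (a, r) \<in> G \<Longrightarrow> r - K * norm (a - x0) \<le> c"
    and upper: "\<And>b q. (b, q) \<in> G \<Longrightarrow> c \<le> K * norm (b + x0) - q"
    using dominated_graph_extension_value[OF G K zero] by blast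
  define G' where "G' = {(a + t *\<^sub>R x0, r + t * c) | a r t. (a, r) \<in> G}"
  have "dominated_graph K G'"
    unfolding G'_def by (rule dominated_graph_line_extension[OF G x0 lower upper])
  moreover have "G \<subseteq> G'"
    unfolding G'_def by (force intro: exI[of _ 0])
  moreover have "(x0, c) \<in> G'"
    unfolding G'_def using zero by (force intro: exI[of _ 1])
  ultimately show ?thesis using x0 by blast
qed

lemma hahn_banach_graph:
  assumes G0: "dominated_graph K G0" and "G0 \<noteq> {}" and K: "K \<ge> 0"
  shows "\<exists>f. linear f \<and> (\<forall>z. f z \<le> K * norm z) \<and> (\<forall>a r. (a, r) \<in> G0 \<longrightarrow> f a = r)"
proof -
  define A where "A = {G. dominated_graph K G \<and> G0 \<subseteq> G}"
  have "\<forall>C\<in>chains A. \<exists>U\<in>A. \<forall>X\<in>C. X \<subseteq> U"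
  proof
    fix C assume C: "C \<in> chains A"
    show "\<exists>U\<in>A. \<forall>X\<in>C. X \<subseteq> U"
    proof (cases "C = {}")
      case True then show ?thesis using G0 unfolding A_def by blast
    next
      case False
      then have "\<Union>C \<in> A" using dominated_graph_chain_Union[of C K G0] C unfolding A_def by blast
      then show ?thesis by blast
    qed
  qed
  from Zorn_Lemma2[OF this] obtain G where "G \<in> A" and max: "\<And>X. X \<in> A \<Longrightarrow> G \<subseteq> X \<Longrightarrow> X = G"
    by blast
  then have G: "dominated_graph K G" and sub: "G0 \<subseteq> G" unfolding A_def by auto
  have total: "\<exists>r. (z, r) \<in> G" for z
  proof (rule ccontr)
    assume "\<nexists>r. (z, r) \<in> G"
    then obtain G' where "dominated_graph K G'" "G \<subseteq> G'" "G' \<noteq> G"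
      using dominated_graph_extend[OF G K] \<open>G0 \<noteq> {}\<close> sub by blast
    with max sub show False unfolding A_def by blast
  qed
  define f where "f z = (THE r. (z, r) \<in> G)" for z
  have graph: "(z, r) \<in> G \<longleftrightarrow> f z = r" for z r
    unfolding f_def using total[of z] dominated_graph_unique[OF G] by (metis theI)
  have "linear f"
  proof (rule linearI)
    show "f (b1 + b2) = f b1 + f b2" for b1 b2
      using graph dominated_graph_add[OF G] by blast
    show "f (r *\<^sub>R b) = r *\<^sub>R f b" for r b
      using graph dominated_graph_scale[OF G] by simp
  qed
  then show ?thesis using graph sub dominated_graph_bound[OF G] by blast
qed

lemma coset_coordinate_bound:
  fixes S :: "'a::real_normed_vector set"
  assumes S: "subspace S" and s: "s \<in> S" and d: "infdist x S > 0"
  shows "t \<le> 1 / infdist x S * norm (s + t *\<^sub>R x)"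
proof (cases "t > 0")
  case False
  have "0 \<le> 1 / infdist x S * norm (s + t *\<^sub>R x)" using d by simp
  then show ?thesis using False by linarith
next
  case True
  have "x - (- (1 / t)) *\<^sub>R s = (1 / t) *\<^sub>R (s + t *\<^sub>R x)"
    using True by (simp add: algebra_simps)
  then have dist: "dist x ((- (1 / t)) *\<^sub>R s) = norm (s + t *\<^sub>R x) / t"
    using True by (simp add: dist_norm)
  have "infdist x S \<le> dist x ((- (1 / t)) *\<^sub>R s)"
    by (rule infdist_le) (use subspace_scale[OF S s] in blast)
  also note dist
  finally show ?thesis using d True by (simp add: field_simps)
qed

lemma subspace_coset_graph_dominated:
  fixes S :: "'a::real_normed_vector set"
  assumes S: "subspace S" and x: "x \<notin> closure S"
  shows "dominated_graph (1 / infdist x S) {(s + t *\<^sub>R x, t) | s t. s \<in> S}"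
proof -
  define d where "d = infdist x S"
  have "S \<noteq> {}" using subspace_0[OF S] by blast
  then have "d \<noteq> 0" using x in_closure_iff_infdist_zero unfolding d_def by blast
  then have d: "d > 0" using infdist_nonneg[of x S] unfolding d_def by linarith
  have xS: "x \<notin> S" using x closure_subset by blast
  show ?thesis
    unfolding dominated_graph_def d_def[symmetric]
  proof (intro conjI allI impI)
    fix a r r' assume "(a, r) \<in> {(s + t *\<^sub>R x, t) | s t. s \<in> S}" "(a, r') \<in> {(s + t *\<^sub>R x, t) | s t. s \<in> S}"
    then obtain s s' where "a = s + r *\<^sub>R x" "s \<in> S" "a = s' + r' *\<^sub>R x" "s' \<in> S" by blast
    then have "s - s' = (r' - r) *\<^sub>R x" by (simp add: algebra_simps)
    then have "(r' - r) *\<^sub>R x \<in> S" using subspace_diff[OF S \<open>s \<in> S\<close> \<open>s' \<in> S\<close>] by simp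
    from subspace_scale[OF S this, of "1 / (r' - r)"] show "r = r'"
      using xS by (cases "r = r'") auto
  next
    fix a r b q
    assume "(a, r) \<in> {(s + t *\<^sub>R x, t) | s t. s \<in> S}" "(b, q) \<in> {(s + t *\<^sub>R x, t) | s t. s \<in> S}"
    then obtain s s' where "a = s + r *\<^sub>R x" "s \<in> S" "b = s' + q *\<^sub>R x" "s' \<in> S" by blast
    then have "a + b = (s + s') + (r + q) *\<^sub>R x" "s + s' \<in> S"
      using subspace_add[OF S] by (simp_all add: algebra_simps)
    then show "(a + b, r + q) \<in> {(s + t *\<^sub>R x, t) | s t. s \<in> S}" by blast
  next
    fix a r c assume "(a, r) \<in> {(s + t *\<^sub>R x, t) | s t. s \<in> S}"
    then obtain s where "a = s + r *\<^sub>R x" "s \<in> S" by blast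
    then have "c *\<^sub>R a = c *\<^sub>R s + (c * r) *\<^sub>R x" "c *\<^sub>R s \<in> S"
      using subspace_scale[OF S] by (simp_all add: algebra_simps)
    then show "(c *\<^sub>R a, c * r) \<in> {(s + t *\<^sub>R x, t) | s t. s \<in> S}" by blast
  next
    fix a r assume "(a, r) \<in> {(s + t *\<^sub>R x, t) | s t. s \<in> S}"
    then show "r \<le> 1 / d * norm a"
      using coset_coordinate_bound[OF S _ d[unfolded d_def]] unfolding d_def by blast
  qed
qed

lemma hahn_banach_separation:
  fixes S :: "'a::real_normed_vector set"
  assumes S: "subspace S" and x: "x \<notin> closure S"
  shows "\<exists>f::'a \<Rightarrow> real. bounded_linear f \<and> (\<forall>s\<in>S. f s = 0) \<and> f x = 1"
proof -
  define K where "K = 1 / infdist x S"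
  have "K \<ge> 0" unfolding K_def by (simp add: infdist_nonneg)
  moreover have "{(s + t *\<^sub>R x, t) | s t. s \<in> S} \<noteq> {}" using subspace_0[OF S] by blast
  ultimately obtain f where f: "linear f" "\<And>z. f z \<le> K * norm z"
    and on_graph: "\<And>s t. s \<in> S \<Longrightarrow> f (s + t *\<^sub>R x) = t"
    using hahn_banach_graph[OF subspace_coset_graph_dominated[OF S x]] unfolding K_def by blast
  have "bounded_linear f"
  proof (rule bounded_linear_intro[where K = K])
    show "f (a + b) = f a + f b" "f (r *\<^sub>R a) = r *\<^sub>R f a" for a b r
      using f(1) by (simp_all add: linear_add linear_scale)
    show "norm (f z) \<le> norm z * K" for z
      using f(2)[of z] f(2)[of "- z"] linear_neg[OF f(1)] by (simp add: abs_le_iff mult.commute)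
  qed
  moreover have "\<forall>s\<in>S. f s = 0" using on_graph[of _ 0] by simp
  moreover have "f x = 1" using on_graph[OF subspace_0[OF S], of 1] by simp
  ultimately show ?thesis by blast
qed

lemma separating_functional:
  fixes x :: "'a::real_normed_vector"
  assumes "x \<noteq> 0"
  shows "\<exists>f::'a \<Rightarrow> real. bounded_linear f \<and> f x = 1"
  using hahn_banach_separation[of "{0}" x] assms by (auto simp: subspace_def)

lemma weak_closureI:
  assumes "\<And>(F :: ('a::real_normed_vector \<Rightarrow> real) set) e.
             finite F \<Longrightarrow> \<forall>f\<in>F. bounded_linear f \<Longrightarrow> e > 0 \<Longrightarrow> \<exists>s\<in>A. \<forall>f\<in>F. \<bar>f s - f y\<bar> < e"
  shows "y \<in> weak_closure A"
  using assms unfolding weak_closure_def by blast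

lemma weak_closureD:
  assumes "y \<in> weak_closure A" "finite (F :: ('a::real_normed_vector \<Rightarrow> real) set)"
    "\<forall>f\<in>F. bounded_linear f" "e > 0"
  shows "\<exists>s\<in>A. \<forall>f\<in>F. \<bar>f s - f y\<bar> < e"
  using assms unfolding weak_closure_def by blast

lemma weak_closure_mono:
  assumes "A \<subseteq> B"
  shows "weak_closure A \<subseteq> weak_closure B"
proof
  fix y assume "y \<in> weak_closure A"
  then show "y \<in> weak_closure B"
    using weak_closureD[of y A] assms by (intro weak_closureI) blast
qed

lemma not_in_weak_closureE:
  assumes "y \<notin> weak_closure A"
  obtains F :: "('a::real_normed_vector \<Rightarrow> real) set" and e where "finite F" "\<forall>f\<in>F. bounded_linear f"
    "e > 0" "\<forall>s\<in>A. \<exists>f\<in>F. \<bar>f s - f y\<bar> \<ge> e"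
  using assms unfolding weak_closure_def by (auto simp: not_less)

lemma weak_closure_bounded_linear_image:
  assumes L: "bounded_linear L" and y: "y \<in> weak_closure A"
  shows "L y \<in> weak_closure (L ` A)"
proof (rule weak_closureI)
  fix F :: "('b \<Rightarrow> real) set" and e :: real
  assume F: "finite F" "\<forall>f\<in>F. bounded_linear f" and e: "e > 0"
  have "finite ((\<lambda>f. f \<circ> L) ` F)" "\<forall>f\<in>(\<lambda>f. f \<circ> L) ` F. bounded_linear f"
    using F L by (auto intro: bounded_linear_compose simp: o_def)
  from weak_closureD[OF y this e] show "\<exists>s\<in>L ` A. \<forall>f\<in>F. \<bar>f s - f (L y)\<bar> < e" by auto
qed

lemma weak_closure_Un: "weak_closure (A \<union> B) \<subseteq> weak_closure A \<union> weak_closure (B :: 'a::real_normed_vector set)"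
proof
  fix y assume y: "y \<in> weak_closure (A \<union> B)"
  show "y \<in> weak_closure A \<union> weak_closure B"
  proof (rule ccontr)
    assume "y \<notin> weak_closure A \<union> weak_closure B"
    then obtain F1 F2 :: "('a \<Rightarrow> real) set" and e1 e2 where
      F1: "finite F1" "\<forall>f\<in>F1. bounded_linear f" "e1 > 0" "\<forall>s\<in>A. \<exists>f\<in>F1. \<bar>f s - f y\<bar> \<ge> e1" and
      F2: "finite F2" "\<forall>f\<in>F2. bounded_linear f" "e2 > 0" "\<forall>s\<in>B. \<exists>f\<in>F2. \<bar>f s - f y\<bar> \<ge> e2"
      using not_in_weak_closureE by (metis UnCI)
    have "finite (F1 \<union> F2)" "\<forall>f\<in>F1 \<union> F2. bounded_linear f" "min e1 e2 > 0" using F1 F2 by auto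
    from weak_closureD[OF y this] obtain s where "s \<in> A \<union> B" "\<forall>f\<in>F1 \<union> F2. \<bar>f s - f y\<bar> < min e1 e2"
      by blast
    with F1(4) F2(4) show False by force
  qed
qed

lemma subspace_weak_closure:
  fixes S :: "'a::real_normed_vector set"
  assumes S: "subspace S"
  shows "weak_closure S \<subseteq> closure S"
proof
  fix x assume x: "x \<in> weak_closure S"
  show "x \<in> closure S"
  proof (rule ccontr)
    assume "x \<notin> closure S"
    then obtain f :: "'a \<Rightarrow> real" where f: "bounded_linear f" "\<forall>s\<in>S. f s = 0" "f x = 1"
      using hahn_banach_separation[OF S] by blast
    have "finite {f}" "\<forall>g\<in>{f}. bounded_linear g" using f by simp_all
    from weak_closureD[OF x this zero_less_one] f show False by auto
  qed
qed

lemma closed_subspace_weakly_closed: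
  fixes S :: "'a::real_normed_vector set"
  assumes "subspace S" "closed S"
  shows "weak_closure S \<subseteq> S"
  using subspace_weak_closure[OF assms(1)] closure_closed[OF assms(2)] by simp

lemma sum_lessThan_add_split:
  fixes g :: "nat \<Rightarrow> 'b::comm_monoid_add"
  shows "(\<Sum>i<n + m. g i) = (\<Sum>i<n. g i) + (\<Sum>i<m. g (n + i))"
  by (induction m) (simp_all add: add.assoc)

locale scalar_module =
  fixes sc :: "'k::real_normed_field \<Rightarrow> 'a::real_normed_vector \<Rightarrow> 'a"
  assumes normed_module: "normed_module sc"
begin

lemma sc_of_real: "sc (of_real r) x = r *\<^sub>R x"
  and sc_assoc: "sc a (sc b x) = sc (a * b) x"
  and sc_add: "sc a (x + y) = sc a x + sc a y"
  and sc_add_left: "sc (a + b) x = sc a x + sc b x"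
  and sc_one: "sc 1 x = x"
  and sc_norm: "norm (sc a x) = norm a * norm x"
  using normed_module unfolding normed_module_def by blast+

lemma sc_zero: "sc a 0 = 0"
  using sc_add[of a 0 0] by simp

lemma sc_minus: "sc a (- x) = - sc a x"
  using sc_add[of a x "- x"] by (simp add: sc_zero eq_neg_iff_add_eq_0 add.commute)

lemma sc_diff: "sc a (x - y) = sc a x - sc a y"
  using sc_add[of a x "- y"] by (simp add: sc_minus)

lemma sc_scaleR: "sc a (r *\<^sub>R x) = r *\<^sub>R sc a x"
  by (simp add: sc_assoc mult.commute flip: sc_of_real)

lemma bounded_linear_sc: "bounded_linear (sc a)"
  by (rule bounded_linear_intro[where K = "norm a"]) (simp_all add: sc_add sc_scaleR sc_norm mult.commute)

lemma sc_sum: "sc z (\<Sum>i<(n::nat). f i) = (\<Sum>i<n. sc z (f i))"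
  by (induction n) (simp_all add: sc_zero sc_add)

lemma linopD:
  assumes "linop sc L"
  shows linop_linear: "linear L" and linop_sc: "L (sc z x) = sc z (L x)"
  using assms unfolding linop_def by (auto simp: bounded_linear.linear)

lemma linop_compose: "linop sc L \<Longrightarrow> linop sc L' \<Longrightarrow> linop sc (L \<circ> L')"
  unfolding linop_def by (auto simp: o_def intro: bounded_linear_compose)

lemma linop_diff: "linop sc L \<Longrightarrow> linop sc L' \<Longrightarrow> linop sc (\<lambda>x. L x - L' x)"
  unfolding linop_def by (auto intro: bounded_linear_sub simp: sc_diff)

lemma linop_sum:
  assumes "linop sc L"
  shows "L (\<Sum>i<(n::nat). sc (c i) (v i)) = (\<Sum>i<n. sc (c i) (L (v i)))"
  using linop_linear[OF assms] linop_sc[OF assms] by (induction n) (simp_all add: linear_add linear_0)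

lemma kspan_single: "x \<in> A \<Longrightarrow> sc z x \<in> kspan sc A"
  unfolding kspan_def by (intro CollectI exI[of _ 1] exI[of _ "\<lambda>_. z"] exI[of _ "\<lambda>_. x"]) simp

lemma subspace_kspan: "subspace (kspan sc A)"
  unfolding subspace_def
proof (intro conjI ballI allI)
  show "0 \<in> kspan sc A" unfolding kspan_def by (intro CollectI exI[of _ 0]) simp
next
  fix a b assume "a \<in> kspan sc A" "b \<in> kspan sc A"
  then obtain n m :: nat and c v d w where a: "a = (\<Sum>i<n. sc (c i) (v i))" "\<forall>i<n. v i \<in> A"
    and b: "b = (\<Sum>i<m. sc (d i) (w i))" "\<forall>i<m. w i \<in> A"
    unfolding kspan_def by blast
  define c' where "c' i = (if i < n then c i else d (i - n))" for i
  define v' where "v' i = (if i < n then v i else w (i - n))" for i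
  have "a + b = (\<Sum>i<n + m. sc (c' i) (v' i))"
    unfolding sum_lessThan_add_split a b c'_def v'_def by simp
  moreover have "\<forall>i<n + m. v' i \<in> A" using a b unfolding v'_def by auto
  ultimately show "a + b \<in> kspan sc A" unfolding kspan_def by blast
next
  fix r a assume "a \<in> kspan sc A"
  then obtain n :: nat and c v where a: "a = (\<Sum>i<n. sc (c i) (v i))" "\<forall>i<n. v i \<in> A"
    unfolding kspan_def by blast
  have "r *\<^sub>R a = (\<Sum>i<n. sc (of_real r * c i) (v i))"
    unfolding a by (simp add: sc_of_real[symmetric] sc_sum sc_assoc)
  with a(2) show "r *\<^sub>R a \<in> kspan sc A"
    unfolding kspan_def mem_Collect_eq by (intro exI[of _ n] exI[of _ "\<lambda>i. of_real r * c i"] exI[of _ v] conjI)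
qed

text \<open>A weakly supercyclic vector is cyclic: the projective orbit lies in the span of the
  orbit, and the weak closure of a subspace is contained in its norm closure.\<close>
lemma weakly_supercyclic_vector_cyclic:
  assumes "weak_closure {sc z ((T ^^ n) u) | z n. True} = UNIV"
  shows "cyclic_vector sc T u"
proof -
  let ?S = "kspan sc (range (\<lambda>n. (T ^^ n) u))"
  have "{sc z ((T ^^ n) u) | z n. True} \<subseteq> ?S" using kspan_single[OF rangeI] by auto
  then have "UNIV \<subseteq> weak_closure ?S" using weak_closure_mono assms by blast
  also have "\<dots> \<subseteq> closure ?S" by (rule subspace_weak_closure[OF subspace_kspan])
  finally show ?thesis unfolding cyclic_vector_def by blast
qed

lemma commuting_operator_vanishing_at_cyclic_vector:
  assumes cyc: "cyclic_vector sc T u" and T: "linear T" and W: "linop sc W"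
    and TW: "\<And>x. T (W x) = W (T x)" and Wu: "W u = 0"
  shows "W x = 0"
proof -
  have "bounded_linear W" using W unfolding linop_def by simp
  then have closed: "closed {x. W x = 0}"
    by (intro closed_Collect_eq) (simp_all add: linear_continuous_on)
  have orbit: "W ((T ^^ n) u) = 0" for n
    by (induction n) (simp_all add: Wu flip: TW, simp add: linear_0[OF T])
  have "kspan sc (range (\<lambda>n. (T ^^ n) u)) \<subseteq> {x. W x = 0}"
  proof
    fix y assume "y \<in> kspan sc (range (\<lambda>n. (T ^^ n) u))"
    then obtain n :: nat and c v where "y = (\<Sum>i<n. sc (c i) (v i))" "\<forall>i<n. v i \<in> range (\<lambda>n. (T ^^ n) u)"
      unfolding kspan_def by blast
    then show "y \<in> {x. W x = 0}" using linop_sum[OF W] orbit by (auto simp: sc_zero intro!: sum.neutral)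
  qed
  then have "closure (kspan sc (range (\<lambda>n. (T ^^ n) u))) \<subseteq> {x. W x = 0}"
    using closed by (rule closure_minimal)
  then show ?thesis using cyc unfolding cyclic_vector_def by blast
qed

lemma scalar_line_closed_subspace:
  assumes k: "complete (UNIV :: 'k set)" and u: "u \<noteq> 0"
  shows "subspace (range (\<lambda>z. sc z u))" "closed (range (\<lambda>z. sc z u))"
proof -
  have bl: "bounded_linear (\<lambda>z. sc z u)"
    by (rule bounded_linear_intro[where K = "norm u"])
      (simp_all add: sc_add_left sc_norm sc_assoc scaleR_conv_of_real flip: sc_of_real)
  show "subspace (range (\<lambda>z. sc z u))"
    using subspace_UNIV by (rule linear_subspace_image[OF bounded_linear.linear[OF bl]])
  have "complete ((\<lambda>z. sc z u) ` UNIV)"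
    by (rule complete_isometric_image[where e = "norm u"]) (use u bl k in \<open>simp_all add: sc_norm\<close>)
  then show "closed (range (\<lambda>z. sc z u))" by (rule complete_imp_closed)
qed

end

text \<open>The place where the class Y enters: a sequence \<open>(l - n) v\<^sub>n\<close> with \<open>\<parallel>v\<^sub>n\<parallel>\<close> bounded
  below grows linearly, so its range is weakly closed.\<close>
lemma class_Y_scaled_sequence_weakly_closed:
  fixes v :: "nat \<Rightarrow> 'a::real_normed_vector"
  assumes Y: "in_class_Y TYPE('a)" and K: "K > 0" and v: "\<And>n. 1 \<le> K * norm (v n)"
  shows "weakly_closed (range (\<lambda>n. (l - real n) *\<^sub>R v n))"
proof -
  have "(\<lambda>n. real n) \<in> O(\<lambda>n. norm ((l - real n) *\<^sub>R v n))"
  proof (rule bigoI[where c = "2 * K"])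
    show "\<forall>\<^sub>F n in at_top. norm (real n) \<le> 2 * K * norm (norm ((l - real n) *\<^sub>R v n))"
    proof (rule eventually_mono[OF eventually_ge_at_top[of "nat \<lceil>2 * \<bar>l\<bar>\<rceil>"]])
      fix n assume "nat \<lceil>2 * \<bar>l\<bar>\<rceil> \<le> n"
      then have "2 * \<bar>l\<bar> \<le> real n" by linarith
      then have "real n \<le> 2 * \<bar>l - real n\<bar>" by (auto simp: abs_if split: if_splits)
      also have "\<dots> \<le> 2 * \<bar>l - real n\<bar> * (K * norm (v n))"
        using mult_left_mono[OF v[of n], of "2 * \<bar>l - real n\<bar>"] by simp
      also have "\<dots> = 2 * K * norm ((l - real n) *\<^sub>R v n)" by simp
      finally show "norm (real n) \<le> 2 * K * norm (norm ((l - real n) *\<^sub>R v n))" by simp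
    qed
  qed
  with spec[OF Y[unfolded in_class_Y_def], of "\<lambda>n. (l - real n) *\<^sub>R v n"] show ?thesis by simp
qed

text \<open>If every point \<open>d + l w\<close> of an affine line lies on the sequence \<open>(l - n) v\<^sub>n\<close>, where a
  real-linear \<open>G\<close> takes the value \<open>1\<close> at \<open>w\<close> and at every \<open>v\<^sub>n\<close>, then \<open>d\<close> is a negative integer
  multiple of \<open>w\<close>: comparing \<open>G\<close>-values pins down the index, and two values of \<open>l\<close> give
  \<open>w = v\<^sub>m\<close>.\<close>
lemma affine_line_on_scaled_sequence:
  fixes G :: "'a::real_vector \<Rightarrow> 'k::real_normed_field"
  assumes G_add: "\<And>a b. G (a + b) = G a + G b" and G_scale: "\<And>r a. G (r *\<^sub>R a) = of_real r * G a"
    and Gv: "\<And>n. G (v n) = 1" and Gw: "G w = 1"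
    and line: "\<And>l. d + l *\<^sub>R w \<in> range (\<lambda>n. (l - real n) *\<^sub>R v n)"
  shows "\<exists>n::nat. d = - real n *\<^sub>R w"
proof -
  have G_seq: "G ((l - real n) *\<^sub>R v n) = of_real (l - real n)" for l n by (simp add: G_scale Gv)
  obtain m where m: "d + 0 *\<^sub>R w = (0 - real m) *\<^sub>R v m" using line[of 0] by auto
  have Gd: "G d = of_real (- real m)" using arg_cong[OF m, of G] unfolding G_seq by simp
  have on_vm: "d + (real m + real j) *\<^sub>R w = real j *\<^sub>R v m" for j :: nat
  proof -
    obtain k where k: "d + (real m + real j) *\<^sub>R w = (real m + real j - real k) *\<^sub>R v k"
      using line[of "real m + real j"] by auto
    have "G d + of_real (real m + real j) * G w = of_real (real m + real j - real k)"
      using arg_cong[OF k, of G] unfolding G_seq by (simp add: G_add G_scale)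
    then have "of_real (real j) = (of_real (real m + real j - real k) :: 'k)" using Gd Gw by simp
    then have "k = m" by (simp only: of_real_eq_iff)
    with k show ?thesis by simp
  qed
  have "w = (d + (real m + 2) *\<^sub>R w) - (d + (real m + 1) *\<^sub>R w)" by (simp add: algebra_simps scaleR_2)
  also have "\<dots> = v m" using on_vm[of 2] on_vm[of 1] by (simp add: scaleR_2)
  finally have "d = - real m *\<^sub>R w" using on_vm[of 1] by (simp add: algebra_simps eq_neg_iff_add_eq_0)
  then show ?thesis by blast
qed

lemma subspace_Un_eq_UNIV:
  fixes L K :: "'a::real_vector set"
  assumes "subspace L" "subspace K" "L \<union> K = UNIV" "K \<noteq> UNIV"
  shows "L = UNIV"
proof -
  obtain x where x: "x \<notin> K" "x \<in> L" using assms(3,4) by blast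
  have "y \<in> L" for y
  proof (rule ccontr)
    assume y: "y \<notin> L"
    then have "y \<in> K" using assms(3) by blast
    then have "x + y \<notin> K" using x(1) subspace_diff[OF assms(2), of "x + y" y] by auto
    then have "x + y \<in> L" using assms(3) by blast
    then show False using y x(2) subspace_diff[OF assms(1), of "x + y" x] by auto
  qed
  then show ?thesis by blast
qed

lemma inverse_near_one:
  fixes \<gamma> :: "'k::real_normed_field"
  assumes "norm (\<gamma> - 1) \<le> e" "e \<le> 1 / 2"
  shows "\<gamma> \<noteq> 0" "norm (1 / \<gamma> - 1) \<le> 2 * e"
proof -
  have "1 \<le> norm \<gamma> + norm (\<gamma> - 1)" using norm_triangle_ineq4[of \<gamma> "\<gamma> - 1"] by simp
  then have \<gamma>: "norm \<gamma> \<ge> 1 / 2" using assms by linarith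
  then show "\<gamma> \<noteq> 0" by auto
  then have "norm (1 / \<gamma> - 1) = norm (\<gamma> - 1) / norm \<gamma>"
    by (simp add: norm_divide norm_minus_commute field_simps)
  also have "\<dots> \<le> e / (1 / 2)"
    using assms \<gamma> norm_ge_zero[of "\<gamma> - 1"] by (intro frac_le) linarith+
  finally show "norm (1 / \<gamma> - 1) \<le> 2 * e" by simp
qed

text \<open>A \<open>'k\<close>-valued map is weakly controlled if its increments are dominated by those of two
  real bounded linear functionals; such maps are continuous for the weak topology.\<close>
definition weakly_controlled :: "('a::real_normed_vector \<Rightarrow> 'k::real_normed_vector) \<Rightarrow> bool" where
  "weakly_controlled G \<longleftrightarrow> (\<exists>g1 g2 :: 'a \<Rightarrow> real. bounded_linear g1 \<and> bounded_linear g2 \<and>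
      (\<forall>a b. norm (G a - G b) \<le> \<bar>g1 a - g1 b\<bar> + \<bar>g2 a - g2 b\<bar>))"

definition scalar_functional :: "('k::real_normed_field \<Rightarrow> 'a::real_normed_vector \<Rightarrow> 'a) \<Rightarrow> ('a \<Rightarrow> 'k) \<Rightarrow> bool" where
  "scalar_functional sc G \<longleftrightarrow>
     (\<forall>a b. G (a + b) = G a + G b) \<and> (\<forall>z a. G (sc z a) = z * G a) \<and> weakly_controlled G"

text \<open>Every real functional composed with scalar multiplication by \<open>\<eta>\<close> is controlled, uniformly
  in \<open>\<eta>\<close>, by two real functionals; this makes \<open>(\<eta>, x) \<mapsto> \<eta> x\<close> weakly continuous.\<close>
definition weakly_continuous_scaling :: "('k::real_normed_field \<Rightarrow> 'a::real_normed_vector \<Rightarrow> 'a) \<Rightarrow> bool" where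
  "weakly_continuous_scaling sc \<longleftrightarrow> (\<forall>f::'a \<Rightarrow> real. bounded_linear f \<longrightarrow>
      (\<exists>h1 h2. bounded_linear h1 \<and> bounded_linear h2 \<and>
         (\<forall>\<eta> a. \<bar>f (sc \<eta> a)\<bar> \<le> norm \<eta> * (\<bar>h1 a\<bar> + \<bar>h2 a\<bar>))))"

context scalar_module
begin

lemma scalar_functionalD:
  assumes "scalar_functional sc G"
  shows scalar_functional_add: "G (a + b) = G a + G b"
    and scalar_functional_sc: "G (sc z a) = z * G a"
    and scalar_functional_weakly_controlled: "weakly_controlled G"
  using assms unfolding scalar_functional_def by blast+

lemma scalar_functional_real_linear:
  assumes G: "scalar_functional sc G"
  shows "G 0 = 0" "G (- a) = - G a" "G (a - b) = G a - G b" "G (r *\<^sub>R a) = of_real r * G a"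
proof -
  show G0: "G 0 = 0" using scalar_functional_add[OF G, of 0 0] by simp
  have minus: "G (- x) = - G x" for x
    using scalar_functional_add[OF G, of x "- x"] G0 by (simp add: eq_neg_iff_add_eq_0 add.commute)
  then show "G (- a) = - G a" .
  show "G (a - b) = G a - G b" using scalar_functional_add[OF G, of a "- b"] minus by simp
  show "G (r *\<^sub>R a) = of_real r * G a" using scalar_functional_sc[OF G] by (simp flip: sc_of_real)
qed

lemma scalar_functional_bounded:
  assumes G: "scalar_functional sc G"
  obtains K where "K > 0" "\<And>a. norm (G a) \<le> K * norm a"
proof -
  obtain g1 g2 :: "'a \<Rightarrow> real" where g: "bounded_linear g1" "bounded_linear g2"
    and dom: "\<And>a b. norm (G a - G b) \<le> \<bar>g1 a - g1 b\<bar> + \<bar>g2 a - g2 b\<bar>"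
    using scalar_functional_weakly_controlled[OF G] unfolding weakly_controlled_def by blast
  obtain K1 K2 where K: "K1 > 0" "\<And>a. norm (g1 a) \<le> norm a * K1" "K2 > 0" "\<And>a. norm (g2 a) \<le> norm a * K2"
    using bounded_linear.pos_bounded[OF g(1)] bounded_linear.pos_bounded[OF g(2)] by blast
  have "norm (G a) \<le> (K1 + K2) * norm a" for a
    using dom[of a 0] K(2,4)[of a] scalar_functional_real_linear(1)[OF G]
      linear_0[OF bounded_linear.linear[OF g(1)]] linear_0[OF bounded_linear.linear[OF g(2)]]
    by (simp add: algebra_simps)
  with K show ?thesis using that[of "K1 + K2"] by simp
qed

lemma scalar_functional_compose:
  assumes G: "scalar_functional sc G" and L: "linop sc L"
  shows "scalar_functional sc (G \<circ> L)"
proof -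
  have bl: "bounded_linear L" and Lsc: "\<And>z x. L (sc z x) = sc z (L x)" using L unfolding linop_def by auto
  obtain g1 g2 :: "'a \<Rightarrow> real" where g: "bounded_linear g1" "bounded_linear g2"
    and dom: "\<And>a b. norm (G a - G b) \<le> \<bar>g1 a - g1 b\<bar> + \<bar>g2 a - g2 b\<bar>"
    using scalar_functional_weakly_controlled[OF G] unfolding weakly_controlled_def by blast
  have "weakly_controlled (G \<circ> L)"
    unfolding weakly_controlled_def
    using bounded_linear_compose[OF g(1) bl] bounded_linear_compose[OF g(2) bl] dom by auto
  then show ?thesis
    unfolding scalar_functional_def
    using linear_add[OF bounded_linear.linear[OF bl]] scalar_functional_add[OF G] scalar_functional_sc[OF G] Lsc
    by simp
qed

lemma weakly_continuous_scalingE: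
  assumes "weakly_continuous_scaling sc"
  obtains H1 H2 :: "('a \<Rightarrow> real) \<Rightarrow> 'a \<Rightarrow> real"
  where "\<And>f. bounded_linear f \<Longrightarrow> bounded_linear (H1 f) \<and> bounded_linear (H2 f) \<and>
          (\<forall>\<eta> a. \<bar>f (sc \<eta> a)\<bar> \<le> norm \<eta> * (\<bar>H1 f a\<bar> + \<bar>H2 f a\<bar>))"
  using assms unfolding weakly_continuous_scaling_def by metis

lemma scaling_weakly_continuous_at_one:
  fixes F :: "('a \<Rightarrow> real) set"
  assumes sc: "weakly_continuous_scaling sc" and F: "finite F" "\<forall>f\<in>F. bounded_linear f" and e: "\<epsilon> > 0"
  obtains F' :: "('a \<Rightarrow> real) set" and \<delta> where "finite F'" "\<forall>f\<in>F'. bounded_linear f" "\<delta> > 0"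
    "\<And>x \<zeta>. \<forall>f\<in>F'. \<bar>f x - f y\<bar> < \<delta> \<Longrightarrow> norm (\<zeta> - 1) \<le> \<delta> \<Longrightarrow> \<forall>f\<in>F. \<bar>f (sc \<zeta> x) - f y\<bar> < \<epsilon>"
proof -
  obtain H1 H2 where H: "\<And>f. bounded_linear f \<Longrightarrow> bounded_linear (H1 f) \<and> bounded_linear (H2 f) \<and>
          (\<forall>\<eta> a. \<bar>f (sc \<eta> a)\<bar> \<le> norm \<eta> * (\<bar>H1 f a\<bar> + \<bar>H2 f a\<bar>))"
    using weakly_continuous_scalingE[OF sc] by blast
  define F' where "F' = F \<union> H1 ` F \<union> H2 ` F"
  define K0 where "K0 = (\<Sum>f\<in>F. \<bar>H1 f y\<bar> + \<bar>H2 f y\<bar> + 2)"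
  define \<delta> where "\<delta> = min 1 (\<epsilon> / (2 * (K0 + 1)))"
  have K0: "K0 \<ge> 0" unfolding K0_def by (intro sum_nonneg) simp
  have \<delta>: "\<delta> > 0" "\<delta> \<le> 1" using e K0 by (auto simp: \<delta>_def)
  have "\<delta> * (K0 + 1) \<le> \<epsilon> / (2 * (K0 + 1)) * (K0 + 1)"
    using K0 by (intro mult_right_mono) (auto simp: \<delta>_def)
  also have "\<dots> = \<epsilon> / 2" using K0 by (simp add: field_simps)
  finally have \<delta>K0: "\<delta> * (K0 + 1) \<le> \<epsilon> / 2" .
  have "finite F'" "\<forall>f\<in>F'. bounded_linear f" unfolding F'_def using F H by auto
  moreover have "\<forall>f\<in>F. \<bar>f (sc \<zeta> x) - f y\<bar> < \<epsilon>"
    if x: "\<forall>f\<in>F'. \<bar>f x - f y\<bar> < \<delta>" and \<zeta>: "norm (\<zeta> - 1) \<le> \<delta>" for x \<zeta>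
  proof
    fix f assume f: "f \<in> F"
    have "\<bar>H1 f x - H1 f y\<bar> < \<delta>" "\<bar>H2 f x - H2 f y\<bar> < \<delta>"
      using x f unfolding F'_def by blast+
    then have "\<bar>H1 f x\<bar> + \<bar>H2 f x\<bar> \<le> \<bar>H1 f y\<bar> + \<bar>H2 f y\<bar> + 2"
      using \<delta>(2) by linarith
    also have "\<dots> \<le> K0"
      unfolding K0_def by (rule member_le_sum[OF f]) (simp_all add: F)
    finally have "\<bar>f (sc (\<zeta> - 1) x)\<bar> \<le> \<delta> * K0"
      using H[OF F(2)[rule_format, OF f]] \<zeta> by (meson abs_ge_zero add_nonneg_nonneg mult_mono norm_ge_zero order.trans)
    moreover have "f (sc \<zeta> x) = f (sc (\<zeta> - 1) x) + f x"
      using sc_add_left[of "\<zeta> - 1" 1 x] F(2) f by (simp add: sc_one linear_add bounded_linear.linear)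
    moreover have "\<bar>f x - f y\<bar> < \<delta>" using x f unfolding F'_def by blast
    ultimately have "\<bar>f (sc \<zeta> x) - f y\<bar> < \<delta> * (K0 + 1)" by (simp add: algebra_simps)
    then show "\<bar>f (sc \<zeta> x) - f y\<bar> < \<epsilon>" using \<delta>K0 e by linarith
  qed
  ultimately show ?thesis using that \<delta>(1) by blast
qed

lemma weak_closure_normalize:
  assumes sc: "weakly_continuous_scaling sc" and \<Phi>: "weakly_controlled \<Phi>"
    and y: "y \<in> weak_closure S" and \<Phi>y: "\<Phi> y = 1"
  shows "y \<in> weak_closure {sc (1 / \<Phi> x) x | x. x \<in> S \<and> \<Phi> x \<noteq> 0}"
proof (rule weak_closureI)
  fix F :: "('a \<Rightarrow> real) set" and \<epsilon> :: real
  assume F: "finite F" "\<forall>f\<in>F. bounded_linear f" and e: "\<epsilon> > 0"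
  obtain F' \<delta> where F': "finite F'" "\<forall>f\<in>F'. bounded_linear f" "\<delta> > 0"
    and close: "\<And>x \<zeta>. \<forall>f\<in>F'. \<bar>f x - f y\<bar> < \<delta> \<Longrightarrow> norm (\<zeta> - 1) \<le> \<delta> \<Longrightarrow> \<forall>f\<in>F. \<bar>f (sc \<zeta> x) - f y\<bar> < \<epsilon>"
    using scaling_weakly_continuous_at_one[OF sc F e] by blast
  obtain g1 g2 :: "'a \<Rightarrow> real" where g: "bounded_linear g1" "bounded_linear g2"
    and dom: "\<And>a b. norm (\<Phi> a - \<Phi> b) \<le> \<bar>g1 a - g1 b\<bar> + \<bar>g2 a - g2 b\<bar>"
    using \<Phi> unfolding weakly_controlled_def by blast
  define \<delta>' where "\<delta>' = min (\<delta> / 4) (1 / 4)"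
  have "finite (F' \<union> {g1, g2})" "\<forall>f\<in>F' \<union> {g1, g2}. bounded_linear f" "\<delta>' > 0"
    using F' g by (auto simp: \<delta>'_def)
  from weak_closureD[OF y this] obtain x where x: "x \<in> S" "\<forall>f\<in>F' \<union> {g1, g2}. \<bar>f x - f y\<bar> < \<delta>'"
    by blast
  have "norm (\<Phi> x - 1) \<le> 2 * \<delta>'" using dom[of x y] x(2) \<Phi>y by force
  moreover have "2 * \<delta>' \<le> 1 / 2" by (simp add: \<delta>'_def)
  ultimately have \<Phi>x: "\<Phi> x \<noteq> 0" "norm (1 / \<Phi> x - 1) \<le> \<delta>"
    using inverse_near_one[of "\<Phi> x" "2 * \<delta>'"] by (auto simp: \<delta>'_def)
  have "\<delta>' \<le> \<delta>" using F'(3) by (simp add: \<delta>'_def)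
  with x(2) have "\<forall>f\<in>F'. \<bar>f x - f y\<bar> < \<delta>" by force
  from close[OF this \<Phi>x(2)] x(1) \<Phi>x(1)
  show "\<exists>s\<in>{sc (1 / \<Phi> x) x | x. x \<in> S \<and> \<Phi> x \<noteq> 0}. \<forall>f\<in>F. \<bar>f s - f y\<bar> < \<epsilon>" by blast
qed

text \<open>Two \<open>'k\<close>-linear operators \<open>D, W\<close> such that \<open>D y\<close> is a nonpositive integer multiple of
  \<open>W y\<close> on the level set \<open>G (W y) = 1\<close>: the integer does not change along directions in
  the kernel of \<open>G \<circ> W\<close>, since it depends affinely on the position on such a line.\<close>
lemma integer_multiple_kernel_direction:
  assumes D: "linop sc D" and W: "linop sc W" and G: "scalar_functional sc G"
    and level: "\<And>y. G (W y) = 1 \<Longrightarrow> \<exists>n::nat. D y = - real n *\<^sub>R W y"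
    and y: "G (W y) = 1" and h: "G (W h) = 0"
  shows "G (D h) = 0"
proof -
  note linD = linop_linear[OF D] and linW = linop_linear[OF W]
  note G_lin = scalar_functional_real_linear[OF G] scalar_functional_add[OF G]
  have on_line: "\<exists>n::nat. G (D (y + t *\<^sub>R h)) = - of_nat n" for t
  proof -
    have "G (W (y + t *\<^sub>R h)) = 1" using y h by (simp add: linear_add[OF linW] linear_scale[OF linW] G_lin)
    then obtain n :: nat where "D (y + t *\<^sub>R h) = - real n *\<^sub>R W (y + t *\<^sub>R h)" using level by blast
    with \<open>G (W (y + t *\<^sub>R h)) = 1\<close> show ?thesis by (auto simp: G_lin)
  qed
  have affine: "G (D (y + t *\<^sub>R h)) = G (D y) + of_real t * G (D h)" for t
    by (simp add: linear_add[OF linD] linear_scale[OF linD] G_lin)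
  obtain n0 n1 :: nat where n0: "G (D y) = - of_nat n0" and n1: "G (D (y + 1 *\<^sub>R h)) = - of_nat n1"
    using on_line[of 0] on_line[of 1] by auto
  define q where "q = real n0 - real n1"
  have Dh: "G (D h) = of_real q" using affine[of 1] n0 n1 unfolding q_def by (simp add: algebra_simps)
  show ?thesis
  proof (rule ccontr)
    assume "G (D h) \<noteq> 0"
    then have q: "q \<noteq> 0" using Dh by simp
    obtain n :: nat where "G (D (y + (1 / (2 * q)) *\<^sub>R h)) = - of_nat n" using on_line by blast
    then have "(of_real (- real n) :: 'k) = of_real (- real n0 + 1 / 2)"
      using affine[of "1 / (2 * q)"] n0 Dh q by (simp add: field_simps)
    then have "real (2 * n0) = real (2 * n + 1)" by (simp only: of_real_eq_iff)
    then have "2 * n0 = 2 * n + 1" by (simp only: of_nat_eq_iff)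
    then show False by presburger
  qed
qed

text \<open>Consequently the integer is the same on the whole level set, and \<open>D = -n W\<close> everywhere
  (decompose \<open>x = h + G (W x) y0\<close> with \<open>G (W h) = 0\<close>).\<close>
lemma uniform_integer_multiple:
  assumes D: "linop sc D" and W: "linop sc W" and G: "scalar_functional sc G"
    and level: "\<And>y. G (W y) = 1 \<Longrightarrow> \<exists>n::nat. D y = - real n *\<^sub>R W y"
    and y0: "G (W y0) = 1"
  shows "\<exists>n::nat. \<forall>x. D x = - real n *\<^sub>R W x"
proof -
  note linD = linop_linear[OF D] and linW = linop_linear[OF W]
    and scD = linop_sc[OF D] and scW = linop_sc[OF W]
  note G_lin = scalar_functional_real_linear[OF G] scalar_functional_add[OF G] scalar_functional_sc[OF G]
  obtain n0 :: nat where n0: "D y0 = - real n0 *\<^sub>R W y0" using level[OF y0] by blast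
  have kernel: "D h = - real n0 *\<^sub>R W h" if h: "G (W h) = 0" for h
  proof -
    have "G (W (y0 + h)) = 1" using y0 h by (simp add: linear_add[OF linW] G_lin)
    then obtain n1 :: nat where n1: "D (y0 + h) = - real n1 *\<^sub>R W (y0 + h)" using level by blast
    have "G (D (y0 + h)) = G (D y0)"
      using integer_multiple_kernel_direction[OF D W G level y0 h] by (simp add: linear_add[OF linD] G_lin)
    then have "n1 = n0" using n0 n1 y0 \<open>G (W (y0 + h)) = 1\<close> by (simp add: G_lin)
    with n0 n1 show ?thesis by (simp add: linear_add[OF linD] linear_add[OF linW] algebra_simps)
  qed
  have "D x = - real n0 *\<^sub>R W x" for x
  proof -
    define h where "h = x - sc (G (W x)) y0"
    have "G (W h) = 0" unfolding h_def by (simp add: linear_diff[OF linW] scW G_lin y0)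
    moreover have "x = h + sc (G (W x)) y0" unfolding h_def by simp
    ultimately show ?thesis
      using kernel n0 by (metis linear_add[OF linD] linear_add[OF linW] scD scW sc_scaleR scaleR_add_right)
  qed
  then show ?thesis by blast
qed

end

locale scalar_dual = scalar_module sc for sc :: "'k::{real_normed_field,banach} \<Rightarrow> 'a::banach \<Rightarrow> 'a" +
  assumes scaling_weakly_continuous: "weakly_continuous_scaling sc"
    and functionals_separate: "\<And>w. w \<noteq> 0 \<Longrightarrow> \<exists>G. scalar_functional sc G \<and> G w \<noteq> 0"

text \<open>The situation of a supposed counterexample: \<open>u\<close> is a weakly supercyclic vector for \<open>T\<close>,
  the hypothesis has been applied to \<open>u\<close> and \<open>v = M T u\<close>, and \<open>G\<close> is a weakly continuous
  functional not vanishing identically on the range of \<open>W = C [T, M]\<close>.\<close>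
locale supercyclic_counterexample = scalar_dual sc
  for sc :: "'k::{real_normed_field,banach} \<Rightarrow> 'a::banach \<Rightarrow> 'a" +
  fixes T M B C :: "'a \<Rightarrow> 'a" and u :: 'a and G :: "'a \<Rightarrow> 'k"
  assumes class_Y: "in_class_Y TYPE('a)"
    and T: "linop sc T" and M: "linop sc M"
    and B: "B \<in> centralizer sc T" and C: "C \<in> centralizer sc T"
    and TTM: "comm T (comm T M) = (\<lambda>x. 0)"
    and CMTu: "C (M (T u)) = B u"
    and supercyclic: "weak_closure {sc z ((T ^^ n) u) | z n. True} = UNIV"
    and G: "scalar_functional sc G" and GW: "G \<circ> (C \<circ> comm T M) \<noteq> (\<lambda>x. 0)"
begin

definition W :: "'a \<Rightarrow> 'a" where "W = C \<circ> comm T M"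

definition D :: "'a \<Rightarrow> 'a" where "D x = C (M (T x)) - B x"

lemma linop_B: "linop sc B" and linop_C: "linop sc C"
  and TB: "T (B x) = B (T x)" and TC: "T (C x) = C (T x)"
  using B C unfolding centralizer_def comm_def by (auto dest: fun_cong)

lemma linop_W: "linop sc W"
  unfolding W_def comm_def
  using linop_compose[OF linop_C linop_diff[OF linop_compose[OF T M] linop_compose[OF M T]]]
  by (simp add: o_def)

lemma linop_D: "linop sc D"
  unfolding D_def[abs_def]
  using linop_diff[OF linop_compose[OF linop_C linop_compose[OF M T]] linop_B] by (simp add: o_def)

lemmas linear_T = linop_linear[OF T] and linear_C = linop_linear[OF linop_C]
  and linear_W = linop_linear[OF linop_W] and linear_D = linop_linear[OF linop_D]

lemma T_W: "T (W x) = W (T x)"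
  using fun_cong[OF TTM, of x] TC[of "T (M x) - M (T x)"] unfolding W_def comm_def by simp

lemma commutator_T_D: "T (D x) - D (T x) = W (T x)"
  unfolding D_def W_def comm_def using TB TC by (simp add: linear_diff[OF linear_T] linear_diff[OF linear_C])

lemma D_funpow: "D ((T ^^ n) x) = (T ^^ n) (D x) - real n *\<^sub>R W ((T ^^ n) x)"
proof (induction n)
  case (Suc n)
  let ?y = "(T ^^ n) x"
  have "D (T ?y) = T (D ?y) - W (T ?y)" using commutator_T_D[of ?y] by (simp add: algebra_simps)
  also have "T (D ?y) = T ((T ^^ n) (D x)) - real n *\<^sub>R W (T ?y)"
    using Suc by (simp add: linear_diff[OF linear_T] linear_scale[OF linear_T] T_W)
  finally show ?case by (simp add: algebra_simps)
qed simp

lemma D_u: "D u = 0"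
  unfolding D_def using CMTu by simp

lemma D_orbit: "D (sc z ((T ^^ n) u)) = - real n *\<^sub>R W (sc z ((T ^^ n) u))"
proof -
  have "(T ^^ n) 0 = 0" by (induction n) (simp_all add: linear_0[OF linear_T])
  then have "D ((T ^^ n) u) = - real n *\<^sub>R W ((T ^^ n) u)" using D_funpow[of n u] by (simp add: D_u)
  then show ?thesis by (simp add: linop_sc[OF linop_D] linop_sc[OF linop_W] sc_scaleR sc_minus)
qed

text \<open>\<open>W\<close> commutes with \<open>T\<close> and is not zero, so it cannot vanish at the cyclic vector \<open>u\<close>.\<close>
lemma W_u: "W u \<noteq> 0"
proof
  assume "W u = 0"
  have "cyclic_vector sc T u" by (rule weakly_supercyclic_vector_cyclic[OF supercyclic])
  then have "W x = 0" for x
    using commuting_operator_vanishing_at_cyclic_vector linear_T linop_W T_W \<open>W u = 0\<close> by blast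
  then show False using GW scalar_functional_real_linear(1)[OF G] unfolding W_def by auto
qed

lemma level_point: "\<exists>y. G (W y) = 1"
proof -
  obtain y where "G (W y) \<noteq> 0" using GW unfolding W_def by (auto simp: fun_eq_iff)
  then have "G (W (sc (1 / G (W y)) y)) = 1"
    by (simp add: linop_sc[OF linop_W] scalar_functional_sc[OF G])
  then show ?thesis by blast
qed


text \<open>The vectors \<open>v\<^sub>n\<close>: the orbit points \<open>T\<^sup>n u\<close> mapped by \<open>W\<close> and normalised to \<open>G\<close>-value \<open>1\<close> (with an arbitrary
  point of the level set where normalisation is impossible).\<close>
definition unit_orbit :: "nat \<Rightarrow> 'a" where
  "unit_orbit n = (if G (W ((T ^^ n) u)) \<noteq> 0 then W (sc (1 / G (W ((T ^^ n) u))) ((T ^^ n) u))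
                   else W (SOME y. G (W y) = 1))"

lemma G_unit_orbit: "G (unit_orbit n) = 1"
  unfolding unit_orbit_def using someI_ex[OF level_point]
  by (simp add: linop_sc[OF linop_W] scalar_functional_sc[OF G])

lemma normalised_orbit_point:
  assumes x: "x = sc z ((T ^^ n) u)" and Gx: "G (W x) \<noteq> 0"
  shows "D (sc (1 / G (W x)) x) + l *\<^sub>R W (sc (1 / G (W x)) x) = (l - real n) *\<^sub>R unit_orbit n"
proof -
  define c where "c = G (W ((T ^^ n) u))"
  have "G (W x) = z * c"
    unfolding x c_def by (simp add: linop_sc[OF linop_W] scalar_functional_sc[OF G])
  with Gx have "c \<noteq> 0" "z \<noteq> 0" and "sc (1 / G (W x)) x = sc (1 / c) ((T ^^ n) u)"
    unfolding x by (auto simp: sc_assoc)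
  moreover have "W (sc (1 / c) ((T ^^ n) u)) = unit_orbit n"
    unfolding unit_orbit_def c_def[symmetric] using \<open>c \<noteq> 0\<close> by simp
  ultimately show ?thesis by (simp add: D_orbit algebra_simps)
qed

lemma unit_orbit_sequence_weakly_closed: "weakly_closed (range (\<lambda>n. (l - real n) *\<^sub>R unit_orbit n))"
proof -
  obtain K where "K > 0" "\<And>a. norm (G a) \<le> K * norm a" using scalar_functional_bounded[OF G] by blast
  then show ?thesis
    using class_Y_scaled_sequence_weakly_closed[OF class_Y] G_unit_orbit by (metis norm_one)
qed

text \<open>Key step: on the level set \<open>G (W y) = 1\<close>, every point \<open>D y + l W y\<close> lies on the sequence
  \<open>(l - n) v\<^sub>n\<close>.  Indeed \<open>y\<close> is a weak limit of normalised orbit points, on which the bounded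
  linear map \<open>D + l W\<close> takes values in that sequence, whose range is weakly closed.\<close>
lemma level_set_on_sequence:
  assumes y: "G (W y) = 1"
  shows "D y + l *\<^sub>R W y \<in> range (\<lambda>n. (l - real n) *\<^sub>R unit_orbit n)"
proof -
  let ?O = "{sc z ((T ^^ n) u) | z n. True}"
  let ?N = "{sc (1 / G (W x)) x | x. x \<in> ?O \<and> G (W x) \<noteq> 0}"
  let ?E = "\<lambda>x. D x + l *\<^sub>R W x"
  have "weakly_controlled (G \<circ> W)"
    using scalar_functional_weakly_controlled[OF scalar_functional_compose[OF G linop_W]] .
  moreover have "y \<in> weak_closure ?O" using supercyclic by simp
  moreover have "(G \<circ> W) y = 1" using y by simp
  ultimately have "y \<in> weak_closure ?N"
    using weak_closure_normalize[OF scaling_weakly_continuous] by fastforce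
  moreover have "bounded_linear ?E"
    using linop_D linop_W unfolding linop_def
    by (intro bounded_linear_add bounded_linear_compose[OF bounded_linear_scaleR_right]) auto
  ultimately have "?E y \<in> weak_closure (?E ` ?N)" by (rule weak_closure_bounded_linear_image[rotated])
  moreover have "?E ` ?N \<subseteq> range (\<lambda>n. (l - real n) *\<^sub>R unit_orbit n)"
    using normalised_orbit_point by fastforce
  ultimately show ?thesis
    using weak_closure_mono unit_orbit_sequence_weakly_closed unfolding weakly_closed_def by blast
qed

lemma level_set_integer_multiple:
  assumes "G (W y) = 1"
  shows "\<exists>n::nat. D y = - real n *\<^sub>R W y"
  using affine_line_on_scaled_sequence[OF _ _ G_unit_orbit assms level_set_on_sequence[OF assms]]
  by (simp add: scalar_functional_add[OF G] scalar_functional_real_linear(4)[OF G])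

text \<open>So \<open>D = -n W\<close> globally, and \<open>n = 0\<close> because \<open>D u = 0 \<noteq> W u\<close>.\<close>
lemma D_zero: "D x = 0"
proof -
  obtain n :: nat where n: "\<And>x. D x = - real n *\<^sub>R W x"
    using uniform_integer_multiple[OF linop_D linop_W G level_set_integer_multiple] level_point by blast
  with D_u W_u have "n = 0" by (metis neg_equal_0_iff_equal of_nat_eq_0_iff scaleR_eq_0_iff)
  with n show ?thesis by simp
qed

lemma W_T: "W (T x) = 0"
  using commutator_T_D[of x] by (simp add: D_zero linear_0[OF linear_T])

text \<open>Hence the projective orbit lies in the union of the line through \<open>u\<close> and \<open>ker W\<close>, two
  weakly closed subspaces; so one of them is everything, which is absurd.\<close>
theorem contradiction: False
proof -
  let ?L = "range (\<lambda>z. sc z u)" and ?K = "{x. W x = 0}"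
  have u: "u \<noteq> 0" using W_u linear_0[OF linear_W] by auto
  have L: "subspace ?L" "closed ?L" using scalar_line_closed_subspace[OF complete_UNIV u] by auto
  have K: "subspace ?K" "closed ?K"
    using linear_W linop_W unfolding linop_def
    by (auto simp: subspace_def linear_add linear_scale linear_0 intro!: closed_Collect_eq linear_continuous_on)
  have "{sc z ((T ^^ n) u) | z n. True} \<subseteq> ?L \<union> ?K"
  proof
    fix x assume "x \<in> {sc z ((T ^^ n) u) | z n. True}"
    then obtain z n where x: "x = sc z ((T ^^ n) u)" by blast
    show "x \<in> ?L \<union> ?K"
    proof (cases n)
      case (Suc m)
      then show ?thesis using x by (simp add: linop_sc[OF linop_W] W_T sc_zero)
    qed (use x in simp)
  qed
  then have "UNIV \<subseteq> weak_closure ?L \<union> weak_closure ?K"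
    using weak_closure_mono weak_closure_Un supercyclic by blast
  then have "?L \<union> ?K = UNIV"
    using closed_subspace_weakly_closed[OF L] closed_subspace_weakly_closed[OF K] by blast
  moreover have "?K \<noteq> UNIV" using W_u by auto
  ultimately have "?L = UNIV" using subspace_Un_eq_UNIV L(1) K(1) by blast
  then obtain a m where a: "T u = sc a u" and m: "M u = sc m u" by (metis UNIV_I imageE)
  have "W (sc z u) = 0" for z
    unfolding W_def comm_def
    by (simp add: linop_sc[OF T] linop_sc[OF M] a m sc_assoc mult.commute mult.left_commute linear_0[OF linear_C])
  then show False using W_u sc_one by metis
qed

end

theorem (in scalar_dual) not_weakly_supercyclic:
  fixes T M :: "'a \<Rightarrow> 'a"
  assumes "in_class_Y TYPE('a)" "linop sc T" "linop sc M" "comm T (comm T M) = (\<lambda>x. 0)"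
    and hyp: "\<forall>u v. cyclic_vector sc T u \<longrightarrow>
               (\<exists>B\<in>centralizer sc T. \<exists>C\<in>centralizer sc T. C \<circ> comm T M \<noteq> (\<lambda>x. 0) \<and> C v = B u)"
  shows "\<not> weakly_supercyclic sc T"
proof
  assume "weakly_supercyclic sc T"
  then obtain u where u: "weak_closure {sc z ((T ^^ n) u) | z n. True} = UNIV"
    unfolding weakly_supercyclic_def by blast
  obtain B C where BC: "B \<in> centralizer sc T" "C \<in> centralizer sc T"
    and CW: "C \<circ> comm T M \<noteq> (\<lambda>x. 0)" and CMTu: "C (M (T u)) = B u"
    using hyp weakly_supercyclic_vector_cyclic[OF u] by blast
  obtain y where "C (comm T M y) \<noteq> 0" using CW by (auto simp: fun_eq_iff)
  then obtain G where G: "scalar_functional sc G" "G (C (comm T M y)) \<noteq> 0"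
    using functionals_separate by blast
  then have "G \<circ> (C \<circ> comm T M) \<noteq> (\<lambda>x. 0)" by (auto simp: fun_eq_iff)
  with assms BC CMTu u G(1) interpret supercyclic_counterexample sc T M B C u G
    by unfold_locales auto
  show False by (rule contradiction)
qed

lemma scalar_dual_real: "scalar_dual (scaleR :: real \<Rightarrow> 'a::banach \<Rightarrow> 'a)"
proof unfold_locales
  show "normed_module (scaleR :: real \<Rightarrow> 'a \<Rightarrow> 'a)"
    unfolding normed_module_def by (simp add: scaleR_add_right scaleR_add_left)
  show "weakly_continuous_scaling (scaleR :: real \<Rightarrow> 'a \<Rightarrow> 'a)"
    unfolding weakly_continuous_scaling_def
  proof (intro allI impI)
    fix f :: "'a \<Rightarrow> real" assume "bounded_linear f"
    then show "\<exists>h1 h2. bounded_linear h1 \<and> bounded_linear h2 \<and>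
        (\<forall>\<eta> a. \<bar>f (\<eta> *\<^sub>R a)\<bar> \<le> norm \<eta> * (\<bar>h1 a\<bar> + \<bar>h2 a\<bar>))"
      using bounded_linear_zero
      by (intro exI[of _ f] exI[of _ "\<lambda>x. 0"]) (simp add: bounded_linear.linear linear_scale abs_mult)
  qed
  show "\<exists>G. scalar_functional scaleR G \<and> G w \<noteq> 0" if w: "w \<noteq> 0" for w :: 'a
  proof -
    obtain g :: "'a \<Rightarrow> real" where g: "bounded_linear g" "g w = 1" using separating_functional[OF w] by blast
    have "weakly_controlled g"
      unfolding weakly_controlled_def using g(1) bounded_linear_zero
      by (intro exI[of _ g] exI[of _ "\<lambda>x. 0"]) simp
    then have "scalar_functional scaleR g"
      unfolding scalar_functional_def using g(1) by (simp add: bounded_linear.linear linear_add linear_scale)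
    with g(2) show ?thesis by auto
  qed
qed

text \<open>Complex normed spaces, viewed as real ones with the extra operator \<open>x \<mapsto> i x\<close>.\<close>
locale complex_module = scalar_module sc for sc :: "complex \<Rightarrow> 'a::real_normed_vector \<Rightarrow> 'a"
begin

lemma sc_decompose: "sc z a = Re z *\<^sub>R a + Im z *\<^sub>R sc \<i> a"
proof -
  have "z = of_real (Re z) + of_real (Im z) * \<i>" by (simp add: complex_eq_iff)
  then have "sc z a = sc (of_real (Re z)) a + sc (of_real (Im z)) (sc \<i> a)"
    by (metis sc_add_left sc_assoc)
  then show ?thesis by (simp add: sc_of_real)
qed

lemma real_functional_sc:
  fixes f :: "'a \<Rightarrow> real"
  assumes "bounded_linear f"
  shows "f (sc z a) = Re z * f a + Im z * f (sc \<i> a)"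
  unfolding sc_decompose[of z a] using assms by (simp add: bounded_linear.linear linear_add linear_scale)

lemma weakly_continuous_scaling_complex: "weakly_continuous_scaling sc"
  unfolding weakly_continuous_scaling_def
proof (intro allI impI)
  fix f :: "'a \<Rightarrow> real" assume f: "bounded_linear f"
  have "\<bar>f (sc \<eta> a)\<bar> \<le> norm \<eta> * (\<bar>f a\<bar> + \<bar>f (sc \<i> a)\<bar>)" for \<eta> a
  proof -
    have "\<bar>f (sc \<eta> a)\<bar> \<le> \<bar>Re \<eta>\<bar> * \<bar>f a\<bar> + \<bar>Im \<eta>\<bar> * \<bar>f (sc \<i> a)\<bar>"
      unfolding real_functional_sc[OF f, of \<eta> a] by (simp add: abs_mult[symmetric] abs_triangle_ineq)
    also have "\<dots> \<le> norm \<eta> * \<bar>f a\<bar> + norm \<eta> * \<bar>f (sc \<i> a)\<bar>"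
      by (intro add_mono mult_right_mono abs_Re_le_cmod abs_Im_le_cmod) auto
    finally show ?thesis by (simp add: algebra_simps)
  qed
  moreover have "bounded_linear (\<lambda>x. f (sc \<i> x))" by (rule bounded_linear_compose[OF f bounded_linear_sc])
  ultimately show "\<exists>h1 h2. bounded_linear h1 \<and> bounded_linear h2 \<and>
      (\<forall>\<eta> a. \<bar>f (sc \<eta> a)\<bar> \<le> norm \<eta> * (\<bar>h1 a\<bar> + \<bar>h2 a\<bar>))" using f by blast
qed

lemma complexified_functional:
  fixes g :: "'a \<Rightarrow> real"
  assumes g: "bounded_linear g"
  shows "scalar_functional sc (\<lambda>x. complex_of_real (g x) - \<i> * complex_of_real (g (sc \<i> x)))"
    (is "scalar_functional sc ?G")
proof -
  define g2 where "g2 x = g (sc \<i> x)" for x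
  have g2: "bounded_linear g2" unfolding g2_def[abs_def] by (rule bounded_linear_compose[OF g bounded_linear_sc])
  have g2_sc: "g2 (sc z a) = - Im z * g a + Re z * g2 a" for z a
    unfolding g2_def sc_assoc real_functional_sc[OF g, of "\<i> * z"] by simp
  have norm_bound: "norm (complex_of_real p - \<i> * complex_of_real q) \<le> \<bar>p\<bar> + \<bar>q\<bar>" for p q
    using norm_triangle_ineq4[of "complex_of_real p" "\<i> * complex_of_real q"] by (simp add: norm_mult)
  have "?G a - ?G b = complex_of_real (g a - g b) - \<i> * complex_of_real (g2 a - g2 b)" for a b
    unfolding g2_def by (simp add: algebra_simps)
  then have "norm (?G a - ?G b) \<le> \<bar>g a - g b\<bar> + \<bar>g2 a - g2 b\<bar>" for a b
    using norm_bound by metis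
  then have "weakly_controlled ?G"
    unfolding weakly_controlled_def using g g2 by (intro exI[of _ g] exI[of _ g2]) simp
  moreover have "?G (a + b) = ?G a + ?G b" for a b
    using g g2 unfolding g2_def by (simp add: bounded_linear.linear linear_add sc_add algebra_simps)
  moreover have "?G (sc z a) = z * ?G a" for z a
    unfolding g2_def[symmetric] g2_sc real_functional_sc[OF g, of z a] by (simp add: complex_eq_iff)
  ultimately show ?thesis unfolding scalar_functional_def by blast
qed

end

lemma scalar_dual_complex:
  fixes sc :: "complex \<Rightarrow> 'a::banach \<Rightarrow> 'a"
  assumes "normed_module sc"
  shows "scalar_dual sc"
proof -
  interpret complex_module sc by unfold_locales fact
  show ?thesis
  proof unfold_locales
    show "weakly_continuous_scaling sc" by (rule weakly_continuous_scaling_complex)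
    show "\<exists>G. scalar_functional sc G \<and> G w \<noteq> 0" if w: "w \<noteq> 0" for w
    proof -
      obtain g :: "'a \<Rightarrow> real" where g: "bounded_linear g" "g w = 1" using separating_functional[OF w] by blast
      with complexified_functional[OF g(1)] show ?thesis
        by (intro exI[of _ "\<lambda>x. complex_of_real (g x) - \<i> * complex_of_real (g (sc \<i> x))"])
          (simp add: complex_eq_iff)
    qed
  qed
qed

theorem corollary1p5:
  shows "(\<forall>(T::'a::banach \<Rightarrow> 'a) M.
            in_class_Y TYPE('a) \<and> linop scaleR T \<and> linop scaleR M \<and>
            comm T (comm T M) = (\<lambda>x. 0) \<and>
            (\<forall>u v. cyclic_vector scaleR T u \<longrightarrow>
               (\<exists>B\<in>centralizer scaleR T. \<exists>C\<in>centralizer scaleR T.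
                  C \<circ> comm T M \<noteq> (\<lambda>x. 0) \<and> C v = B u))
            \<longrightarrow> \<not> weakly_supercyclic scaleR T)
       \<and> (\<forall>(sc::complex \<Rightarrow> 'b::banach \<Rightarrow> 'b) (T::'b \<Rightarrow> 'b) M.
            normed_module sc \<and>
            in_class_Y TYPE('b) \<and> linop sc T \<and> linop sc M \<and>
            comm T (comm T M) = (\<lambda>x. 0) \<and>
            (\<forall>u v. cyclic_vector sc T u \<longrightarrow>
               (\<exists>B\<in>centralizer sc T. \<exists>C\<in>centralizer sc T.
                  C \<circ> comm T M \<noteq> (\<lambda>x. 0) \<and> C v = B u))
            \<longrightarrow> \<not> weakly_supercyclic sc T)"
  using scalar_dual.not_weakly_supercyclic[OF scalar_dual_real]
    scalar_dual.not_weakly_supercyclic[OF scalar_dual_complex] by blast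

end
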